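(* Let $\rho\in(0,1)$ and $0<\alpha\le\min\{1/2,2\rho,2(1-\rho)\}$. Let $\Theta=[-\alpha/20,\alpha/20]$ and for $\theta\in\Theta$ set $l_1(\theta)=\frac{4\rho-\alpha}{16-8\alpha}+\theta$, $l_2(\theta)=l_1(\theta)+\rho/2$, $r_2(\theta)=l_2(\theta)+1/4$, $r_1(\theta)=r_2(\theta)+(1-\rho)/2$, $w_1=2\pi/\rho$, $w_2=2\pi/(1-\rho)$. Define the density $f(x|\theta)=0$ for $x\notin[0,1]$ and, for $x\in[0,1]$: $f(x|\theta)=2-\alpha$ on $[0,l_1(\theta)]\cup[r_1(\theta),1]$; $f(x|\theta)=\alpha$ on $(l_2(\theta),r_2(\theta)]$; $f(x|\theta)=\alpha+(1-\alpha)(\cos(w_1(x-l_1(\theta)))+1)$ on $[l_1(\theta),l_2(\theta)]$; $f(x|\theta)=\alpha+(1-\alpha)(\cos(w_2(r_1(\theta)-x))+1)$ on $[r_2(\theta),r_1(\theta)]$. For $t\ge1$ let $X_1,\dots,X_t$ be i.i.d. with density $f(\cdot|\theta)$ and joint density $f(X_1,\dots,X_t|\theta)$. Then for every $t\ge1$ and $\theta\in\Theta$, $$I_t(\theta):=\mathbb{E}_\theta\left[\left(\frac{\partial\log f(X_1,\dots,X_t|\theta)}{\partial\theta}\right)^2\right]\le\frac{4\pi^2 t}{\rho(1-\rho)}.$$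
   Context: $I_t(\theta)$ is the Fisher information of $t$ i.i.d. samples about the parameter $\theta$; $\mathbb{E}_\theta$ is the expectation over $X_1,\dots,X_t$. *)

theory Defs
  imports "HOL-Analysis.Analysis"
begin

definition l1 :: "real \<Rightarrow> real \<Rightarrow> real \<Rightarrow> real" where
  "l1 \<rho> \<alpha> \<theta> = (4*\<rho> - \<alpha>) / (16 - 8*\<alpha>) + \<theta>"

definition l2 :: "real \<Rightarrow> real \<Rightarrow> real \<Rightarrow> real" where
  "l2 \<rho> \<alpha> \<theta> = l1 \<rho> \<alpha> \<theta> + \<rho>/2"

definition r2 :: "real \<Rightarrow> real \<Rightarrow> real \<Rightarrow> real" where
  "r2 \<rho> \<alpha> \<theta> = l2 \<rho> \<alpha> \<theta> + 1/4"

definition r1 :: "real \<Rightarrow> real \<Rightarrow> real \<Rightarrow> real" where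
  "r1 \<rho> \<alpha> \<theta> = r2 \<rho> \<alpha> \<theta> + (1 - \<rho>)/2"

definition w1 :: "real \<Rightarrow> real" where "w1 \<rho> = 2*pi/\<rho>"
definition w2 :: "real \<Rightarrow> real" where "w2 \<rho> = 2*pi/(1 - \<rho>)"

text \<open>The density f(x|theta). The pieces agree at the shared breakpoints.\<close>
definition fdens :: "real \<Rightarrow> real \<Rightarrow> real \<Rightarrow> real \<Rightarrow> real" where
  "fdens \<rho> \<alpha> \<theta> x =
     (if x < 0 \<or> x > 1 then 0
      else if x \<le> l1 \<rho> \<alpha> \<theta> \<or> x \<ge> r1 \<rho> \<alpha> \<theta> then 2 - \<alpha>
      else if x \<le> l2 \<rho> \<alpha> \<theta> then \<alpha> + (1 - \<alpha>) * (cos (w1 \<rho> * (x - l1 \<rho> \<alpha> \<theta>)) + 1)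
      else if x \<le> r2 \<rho> \<alpha> \<theta> then \<alpha>
      else \<alpha> + (1 - \<alpha>) * (cos (w2 \<rho> * (r1 \<rho> \<alpha> \<theta> - x)) + 1))"

definition joint_dens :: "real \<Rightarrow> real \<Rightarrow> nat \<Rightarrow> real \<Rightarrow> (nat \<Rightarrow> real) \<Rightarrow> real" where
  "joint_dens \<rho> \<alpha> t \<theta> X = (\<Prod>i<t. fdens \<rho> \<alpha> \<theta> (X i))"

text \<open>Fisher information I_t(theta) = E_theta[(d/dtheta log f(X_1..X_t|theta))^2],
  written as the (nonnegative) integral against the joint density over R^t.\<close>
definition fisher_info :: "real \<Rightarrow> real \<Rightarrow> nat \<Rightarrow> real \<Rightarrow> ennreal" where
  "fisher_info \<rho> \<alpha> t \<theta> =
     (\<integral>\<^sup>+ X. ennreal (joint_dens \<rho> \<alpha> t \<theta> X *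
        (deriv (\<lambda>s. ln (joint_dens \<rho> \<alpha> t s X)) \<theta>)\<^sup>2)
      \<partial>(PiM {..<t} (\<lambda>_. lborel)))"

end

theory Submission
  imports Defs
begin

text \<open>
  The density is \<open>f(x|\<theta>) = 1[0,1](x) G(x - \<theta>)\<close> for one fixed continuously
  differentiable profile \<open>G \<ge> \<alpha> > 0\<close>, and for \<open>\<theta> \<in> \<Theta>\<close> the non-constant part of
  \<open>G(\<cdot> - \<theta>)\<close> lies inside \<open>[0,1]\<close>. So the score of one sample is \<open>-G'/G (X - \<theta>)\<close>,
  which has mean \<open>G(1 - \<theta>) - G(-\<theta>) = 0\<close>; expanding the square of the joint score,
  the cross terms vanish and \<open>I_t = t I_1\<close>. On each cosine bump
  \<open>(1-\<alpha>)\<^sup>2 sin\<^sup>2 y \<le> 2 (\<alpha> + (1-\<alpha>)(1 + cos y))\<close> gives \<open>G'\<^sup>2/G \<le> 2 w\<^sup>2\<close>, and the bumps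
  have lengths \<open>\<rho>/2\<close> and \<open>(1-\<rho>)/2\<close>, whence
  \<open>I_1 \<le> \<rho> w1\<^sup>2 + (1-\<rho>) w2\<^sup>2 = 4\<pi>\<^sup>2/\<rho> + 4\<pi>\<^sup>2/(1-\<rho>) = 4\<pi>\<^sup>2/(\<rho>(1-\<rho>))\<close>.
\<close>

lemma DERIV_if_le:
  fixes f g :: "real \<Rightarrow> real"
  assumes f: "\<And>x. (f has_real_derivative f' x) (at x)"
    and g: "\<And>x. (g has_real_derivative g' x) (at x)"
    and glue: "f a = g a" and glue': "f' a = g' a"
  shows "((\<lambda>x. if x \<le> a then f x else g x) has_real_derivative
      (if x \<le> a then f' x else g' x)) (at x)"
proof -
  let ?h = "\<lambda>x. if x \<le> a then f x else g x"
  consider "x < a" | "a < x" | "x = a" by linarith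
  then show ?thesis
  proof cases
    case 1
    have "(?h has_real_derivative f' x) (at x)"
      by (rule has_field_derivative_transform_within_open[OF f, of "{..<a}"]) (use 1 in auto)
    with 1 show ?thesis by simp
  next
    case 2
    have "(?h has_real_derivative g' x) (at x)"
      by (rule has_field_derivative_transform_within_open[OF g, of "{a<..}"]) (use 2 in auto)
    with 2 show ?thesis by simp
  next
    case 3
    have left: "(?h has_real_derivative f' a) (at a within {..a})"
      using has_field_derivative_at_within[OF f]
      by (rule has_field_derivative_transform_within[of _ _ _ _ 1]) auto
    have right: "(?h has_real_derivative f' a) (at a within {a..})"
      using has_field_derivative_at_within[OF g[of a, folded glue']]
      by (rule has_field_derivative_transform_within[of _ _ _ _ 1]) (use glue in auto)
    have "(?h has_real_derivative f' a) (at a within ({..a} \<union> {a..}))"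
      using left right unfolding has_field_derivative_iff by (simp add: Lim_within_Un)
    moreover have "{..a} \<union> {a..} = (UNIV :: real set)" by auto
    ultimately show ?thesis using 3 by simp
  qed
qed

lemma cos_bump_score_le:
  fixes a w y :: real
  assumes "0 < a" "a \<le> 1"
  shows "((1 - a) * w * sin y)\<^sup>2 / (a + (1 - a) * (cos y + 1)) \<le> 2 * w\<^sup>2"
proof -
  have cos_bounds: "0 \<le> 1 + cos y" "1 - cos y \<le> 2"
    using cos_ge_minus_one[of y] cos_le_one[of y] by linarith+
  have denom_pos: "0 < a + (1 - a) * (cos y + 1)"
    using assms cos_bounds(1) mult_nonneg_nonneg[of "1 - a" "cos y + 1"] by linarith
  have "(1 - a)\<^sup>2 * (sin y)\<^sup>2 = ((1 - a) * (1 - cos y)) * ((1 - a) * (1 + cos y))"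
    unfolding sin_squared_eq by (simp add: power2_eq_square algebra_simps)
  also have "\<dots> \<le> 2 * ((1 - a) * (1 + cos y))"
  proof (rule mult_right_mono)
    show "(1 - a) * (1 - cos y) \<le> 2"
      using mult_mono[of "1 - a" 1 "1 - cos y" 2] assms cos_bounds by simp
    show "0 \<le> (1 - a) * (1 + cos y)"
      by (rule mult_nonneg_nonneg) (use assms cos_bounds in linarith)+
  qed
  also have "\<dots> \<le> 2 * (a + (1 - a) * (cos y + 1))"
    using assms by (simp add: add.commute)
  finally have bound: "(1 - a)\<^sup>2 * (sin y)\<^sup>2 \<le> 2 * (a + (1 - a) * (cos y + 1))" .
  have "((1 - a) * w * sin y)\<^sup>2 = w\<^sup>2 * ((1 - a)\<^sup>2 * (sin y)\<^sup>2)"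
    by (simp add: power_mult_distrib mult_ac)
  also have "\<dots> \<le> w\<^sup>2 * (2 * (a + (1 - a) * (cos y + 1)))"
    using bound by (rule mult_left_mono) simp
  also have "\<dots> = 2 * w\<^sup>2 * (a + (1 - a) * (cos y + 1))"
    by (simp only: mult_ac)
  finally show ?thesis
    by (simp only: pos_divide_le_eq[OF denom_pos])
qed

lemma deriv_ln_prod_shift:
  fixes G G' :: "real \<Rightarrow> real" and X :: "'i \<Rightarrow> real"
  assumes "finite K" and G_pos: "\<And>u. 0 < G u" and G': "\<And>u. (G has_real_derivative G' u) (at u)"
  shows "deriv (\<lambda>s. ln (\<Prod>k\<in>K. G (X k - s))) \<theta> = - (\<Sum>k\<in>K. G' (X k - \<theta>) / G (X k - \<theta>))"
proof -
  have "(\<lambda>s. ln (\<Prod>k\<in>K. G (X k - s))) = (\<lambda>s. \<Sum>k\<in>K. ln (G (X k - s)))"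
    using G_pos by (intro ext ln_prod) (auto simp: \<open>finite K\<close> less_imp_neq[symmetric])
  moreover have "((\<lambda>s. \<Sum>k\<in>K. ln (G (X k - s))) has_real_derivative
      (\<Sum>k\<in>K. - (G' (X k - \<theta>) / G (X k - \<theta>)))) (at \<theta>)"
    using G_pos by (auto intro!: derivative_eq_intros DERIV_chain2[OF G'] simp: field_simps)
  ultimately show ?thesis
    by (simp add: DERIV_imp_deriv sum_negf)
qed

lemma nn_integral_PiM_prod_sum_square:
  fixes \<phi> b :: "'a \<Rightarrow> real"
  assumes "sigma_finite_measure M" and "finite I"
    and \<phi>_nonneg: "\<And>y. 0 \<le> \<phi> y"
    and int0: "integrable M \<phi>" and int1: "integrable M (\<lambda>y. \<phi> y * b y)"
    and int2: "integrable M (\<lambda>y. \<phi> y * (b y)\<^sup>2)"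
    and mass: "(\<integral>y. \<phi> y \<partial>M) = 1" and centered: "(\<integral>y. \<phi> y * b y \<partial>M) = 0"
  shows "(\<integral>\<^sup>+X. ennreal ((\<Prod>k\<in>I. \<phi> (X k)) * (\<Sum>k\<in>I. b (X k))\<^sup>2) \<partial>PiM I (\<lambda>_. M))
    = ennreal (card I * (\<integral>y. \<phi> y * (b y)\<^sup>2 \<partial>M))"
proof -
  interpret product_sigma_finite "\<lambda>_. M"
    using assms(1) by (simp add: product_sigma_finite_def)
  define \<psi> where "\<psi> i j k y = \<phi> y * (if k = i then b y else 1) * (if k = j then b y else 1)"
    for i j k :: 'b and y
  define F where "F X = (\<Sum>i\<in>I. \<Sum>j\<in>I. \<Prod>k\<in>I. \<psi> i j k (X k))" for X
  have F_eq: "F X = (\<Prod>k\<in>I. \<phi> (X k)) * (\<Sum>k\<in>I. b (X k))\<^sup>2" for X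
  proof -
    have "(\<Prod>k\<in>I. \<psi> i j k (X k)) = (\<Prod>k\<in>I. \<phi> (X k)) * b (X i) * b (X j)" if "i \<in> I" "j \<in> I" for i j
      using that \<open>finite I\<close> by (simp add: \<psi>_def prod.distrib prod.delta)
    then have "F X = (\<Sum>i\<in>I. \<Sum>j\<in>I. (\<Prod>k\<in>I. \<phi> (X k)) * b (X i) * b (X j))"
      unfolding F_def by (intro sum.cong) auto
    also have "\<dots> = (\<Prod>k\<in>I. \<phi> (X k)) * ((\<Sum>k\<in>I. b (X k)) * (\<Sum>k\<in>I. b (X k)))"
      by (subst sum_product) (simp only: sum_distrib_left mult.assoc)
    finally show ?thesis
      by (simp add: power2_eq_square)
  qed
  have \<psi>_cases: "\<psi> i j k = (if k = i \<and> k = j then (\<lambda>y. \<phi> y * (b y)\<^sup>2)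
      else if k = i \<or> k = j then (\<lambda>y. \<phi> y * b y) else \<phi>)" for i j k
    by (auto simp: fun_eq_iff \<psi>_def power2_eq_square)
  have \<psi>_integrable: "integrable M (\<psi> i j k)" for i j k
    using int0 int1 int2 by (simp add: \<psi>_cases)
  have \<psi>_integral: "(\<integral>y. \<psi> i j k y \<partial>M) =
      (if k = i \<and> k = j then \<integral>y. \<phi> y * (b y)\<^sup>2 \<partial>M else if k = i \<or> k = j then 0 else 1)" for i j k
    using mass centered by (simp add: \<psi>_cases)
  txt \<open>Each of the \<open>card I\<^sup>2\<close> terms of the expanded square is a product integral that
    factorises; the off-diagonal ones contain the factor \<open>\<integral>\<phi> b = 0\<close>.\<close>
  have "(\<integral>X. F X \<partial>PiM I (\<lambda>_. M)) = (\<Sum>i\<in>I. \<Sum>j\<in>I. \<Prod>k\<in>I. \<integral>y. \<psi> i j k y \<partial>M)"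
    unfolding F_def using \<open>finite I\<close>
    by (simp add: product_integrable_prod product_integral_prod \<psi>_integrable)
  also have "\<dots> = (\<Sum>i\<in>I. \<Sum>j\<in>I. if i = j then \<integral>y. \<phi> y * (b y)\<^sup>2 \<partial>M else 0)"
  proof (intro sum.cong refl)
    fix i j assume "i \<in> I" "j \<in> I"
    then show "(\<Prod>k\<in>I. \<integral>y. \<psi> i j k y \<partial>M) = (if i = j then \<integral>y. \<phi> y * (b y)\<^sup>2 \<partial>M else 0)"
      using \<open>finite I\<close> by (auto simp: \<psi>_integral prod.If_cases prod_zero_iff)
  qed
  also have "\<dots> = card I * (\<integral>y. \<phi> y * (b y)\<^sup>2 \<partial>M)"
    using \<open>finite I\<close> by simp
  finally have "(\<integral>X. F X \<partial>PiM I (\<lambda>_. M)) = card I * (\<integral>y. \<phi> y * (b y)\<^sup>2 \<partial>M)" .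
  moreover have "integrable (PiM I (\<lambda>_. M)) F"
    unfolding F_def using \<open>finite I\<close> by (simp add: product_integrable_prod \<psi>_integrable)
  moreover have "0 \<le> F X" for X
    unfolding F_eq using \<phi>_nonneg by (simp add: prod_nonneg)
  ultimately show ?thesis
    by (simp add: nn_integral_eq_integral F_eq[symmetric])
qed

lemma integrable_indicator_Icc_mult:
  fixes f :: "real \<Rightarrow> real"
  assumes "continuous_on {a..b} f"
  shows "integrable lborel (\<lambda>x. indicator {a..b} x * f x)"
  using borel_integrable_compact[OF compact_Icc assms] by simp

lemma integral_indicator_Icc_shift_FTC:
  fixes F f :: "real \<Rightarrow> real"
  assumes "a \<le> b" and F: "\<And>u. (F has_real_derivative f u) (at u)" and f: "continuous_on UNIV f"
  shows "(\<integral>x. indicator {a..b} x * f (x - \<theta>) \<partial>lborel) = F (b - \<theta>) - F (a - \<theta>)"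
proof -
  have "((\<lambda>x. F (x - \<theta>)) has_real_derivative f (x - \<theta>) * 1) (at x)" for x
    by (rule DERIV_chain2[OF F]) (auto intro!: derivative_eq_intros)
  then have "((\<lambda>x. F (x - \<theta>)) has_vector_derivative f (x - \<theta>)) (at x within {a..b})" for x
    by (simp add: has_real_derivative_iff_has_vector_derivative[symmetric]
        has_field_derivative_at_within)
  moreover have "continuous_on {a..b} (\<lambda>x. f (x - \<theta>))"
    by (rule continuous_on_compose2[OF f]) (auto intro!: continuous_intros)
  ultimately show ?thesis
    using integral_FTC_atLeastAtMost[OF \<open>a \<le> b\<close>, of "\<lambda>x. F (x - \<theta>)" "\<lambda>x. f (x - \<theta>)"] by simp
qed

locale two_bump_density =
  fixes \<rho> \<alpha> :: real
  assumes rho_pos: "0 < \<rho>" and rho_less_one: "\<rho> < 1"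
    and alpha_pos: "0 < \<alpha>" and alpha_le_one: "\<alpha> \<le> 1"
begin

definition L1 :: real where "L1 = l1 \<rho> \<alpha> 0"
definition L2 :: real where "L2 = l2 \<rho> \<alpha> 0"
definition R2 :: real where "R2 = r2 \<rho> \<alpha> 0"
definition R1 :: real where "R1 = r1 \<rho> \<alpha> 0"

lemma breakpoints_shift:
  "l1 \<rho> \<alpha> \<theta> = L1 + \<theta>" "l2 \<rho> \<alpha> \<theta> = L2 + \<theta>" "r2 \<rho> \<alpha> \<theta> = R2 + \<theta>" "r1 \<rho> \<alpha> \<theta> = R1 + \<theta>"
  by (simp_all add: L1_def L2_def R2_def R1_def l1_def l2_def r2_def r1_def)

lemma breakpoint_gaps: "L2 = L1 + \<rho>/2" "R2 = L2 + 1/4" "R1 = R2 + (1 - \<rho>)/2"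
  by (simp_all add: L1_def L2_def R2_def R1_def l2_def r2_def r1_def)

lemma breakpoints_ordered: "L1 < L2" "L2 < R2" "R2 < R1"
  using rho_pos rho_less_one by (simp_all add: breakpoint_gaps)

lemma frequencies_pos: "0 < w1 \<rho>" "0 < w2 \<rho>"
  using rho_pos rho_less_one by (simp_all add: w1_def w2_def)

lemma half_periods: "w1 \<rho> * (L2 - L1) = pi" "w2 \<rho> * (R1 - R2) = pi"
  using rho_pos rho_less_one by (simp_all add: w1_def w2_def breakpoint_gaps)

definition profile :: "real \<Rightarrow> real" where
  "profile = (\<lambda>u. if u \<le> L1 then 2 - \<alpha>
     else if u \<le> L2 then \<alpha> + (1 - \<alpha>) * (cos (w1 \<rho> * (u - L1)) + 1)
     else if u \<le> R2 then \<alpha>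
     else if u \<le> R1 then \<alpha> + (1 - \<alpha>) * (cos (w2 \<rho> * (R1 - u)) + 1)
     else 2 - \<alpha>)"

definition profile' :: "real \<Rightarrow> real" where
  "profile' = (\<lambda>u. if u \<le> L1 then 0
     else if u \<le> L2 then - ((1 - \<alpha>) * w1 \<rho> * sin (w1 \<rho> * (u - L1)))
     else if u \<le> R2 then 0
     else if u \<le> R1 then (1 - \<alpha>) * w2 \<rho> * sin (w2 \<rho> * (R1 - u))
     else 0)"

definition profile_primitive :: "real \<Rightarrow> real" where
  "profile_primitive = (\<lambda>u. if u \<le> L1 then (2 - \<alpha>) * u
     else if u \<le> L2 then u + (1 - \<alpha>) * (sin (w1 \<rho> * (u - L1)) / w1 \<rho> + L1)
     else if u \<le> R2 then \<alpha> * u + (1 - \<alpha>) * (L1 + L2)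
     else if u \<le> R1 then u - (1 - \<alpha>) * (sin (w2 \<rho> * (R1 - u)) / w2 \<rho> - (L1 + L2 - R2))
     else (2 - \<alpha>) * u - (1 - \<alpha>))"

lemma DERIV_profile: "(profile has_real_derivative profile' u) (at u)"
  unfolding profile_def profile'_def using breakpoints_ordered
  by (intro DERIV_if_le) (auto intro!: derivative_eq_intros simp: half_periods)

lemma DERIV_profile_primitive: "(profile_primitive has_real_derivative profile u) (at u)"
  unfolding profile_primitive_def profile_def using breakpoints_ordered frequencies_pos
  by (intro DERIV_if_le)
    (auto intro!: derivative_eq_intros simp: half_periods field_simps,
     simp add: breakpoint_gaps field_simps)

lemma continuous_on_profile': "continuous_on UNIV profile'"
  unfolding profile'_def using breakpoints_ordered
  by (intro continuous_on_cases_le continuous_intros) (auto simp: half_periods)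

lemma continuous_on_profile: "continuous_on UNIV profile"
  by (rule DERIV_continuous_on, rule has_field_derivative_at_within, rule DERIV_profile)

lemma continuous_on_profile_comp [continuous_intros]:
  "continuous_on S g \<Longrightarrow> continuous_on S (\<lambda>x. profile (g x))"
  by (rule continuous_on_compose2[OF continuous_on_profile]) auto

lemma continuous_on_profile'_comp [continuous_intros]:
  "continuous_on S g \<Longrightarrow> continuous_on S (\<lambda>x. profile' (g x))"
  by (rule continuous_on_compose2[OF continuous_on_profile']) auto

lemma profile_ge_alpha: "\<alpha> \<le> profile u"
proof -
  have "0 \<le> (1 - \<alpha>) * (cos y + 1)" for y
    using alpha_le_one cos_ge_minus_one[of y] by (intro mult_nonneg_nonneg) linarith+
  then show ?thesis
    using alpha_le_one by (auto simp: profile_def)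
qed

lemma profile_pos: "0 < profile u"
  using profile_ge_alpha[of u] alpha_pos by linarith

lemma profile_outside: "u \<le> L1 \<or> R1 \<le> u \<Longrightarrow> profile u = 2 - \<alpha>"
  using breakpoints_ordered by (cases "u = R1") (auto simp: profile_def)

lemma profile_primitive_right: "R1 \<le> u \<Longrightarrow> profile_primitive u = (2 - \<alpha>) * u - (1 - \<alpha>)"
  using breakpoints_ordered
  by (cases "u = R1") (auto simp: profile_primitive_def breakpoint_gaps field_simps)

lemma fdens_eq_profile: "fdens \<rho> \<alpha> \<theta> x = indicator {0..1} x * profile (x - \<theta>)"
  using breakpoints_ordered
  by (cases "x = R1 + \<theta>") (auto simp: fdens_def profile_def breakpoints_shift algebra_simps)

lemma profile'_square_div_le:
  "(profile' u)\<^sup>2 / profile u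
    \<le> 2 * (w1 \<rho>)\<^sup>2 * indicator {L1..L2} u + 2 * (w2 \<rho>)\<^sup>2 * indicator {R2..R1} u"
proof -
  consider "u \<le> L1 \<or> L2 < u \<and> u \<le> R2 \<or> R1 < u" | "L1 < u" "u \<le> L2" | "R2 < u" "u \<le> R1"
    by linarith
  then show ?thesis
  proof cases
    case 1
    then show ?thesis
      using breakpoints_ordered by (auto simp: profile'_def)
  next
    case 2
    then have "(profile' u)\<^sup>2 / profile u \<le> 2 * (w1 \<rho>)\<^sup>2"
      using cos_bump_score_le[OF alpha_pos alpha_le_one, of "w1 \<rho>" "w1 \<rho> * (u - L1)"]
      by (simp add: profile'_def profile_def)
    with 2 show ?thesis
      using breakpoints_ordered by (simp add: indicator_def)
  next
    case 3
    then have "(profile' u)\<^sup>2 / profile u \<le> 2 * (w2 \<rho>)\<^sup>2"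
      using cos_bump_score_le[OF alpha_pos alpha_le_one, of "w2 \<rho>" "w2 \<rho> * (R1 - u)"]
        breakpoints_ordered
      by (simp add: profile'_def profile_def)
    with 3 show ?thesis
      using breakpoints_ordered by (simp add: indicator_def)
  qed
qed

lemma integral_profile_shift:
  assumes "0 \<le> L1 + \<theta>" and "R1 + \<theta> \<le> 1"
  shows "(\<integral>x. indicator {0..1} x * profile (x - \<theta>) \<partial>lborel) = 1"
  using assms profile_primitive_right[of "1 - \<theta>"]
  by (simp add:
      integral_indicator_Icc_shift_FTC[OF _ DERIV_profile_primitive continuous_on_profile])
    (simp add: profile_primitive_def algebra_simps)

lemma integral_profile'_shift:
  assumes "0 \<le> L1 + \<theta>" and "R1 + \<theta> \<le> 1"
  shows "(\<integral>x. indicator {0..1} x * profile' (x - \<theta>) \<partial>lborel) = 0"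
  using assms profile_outside[of "1 - \<theta>"] profile_outside[of "- \<theta>"]
  by (simp add: integral_indicator_Icc_shift_FTC[OF _ DERIV_profile continuous_on_profile'])

lemma integrable_score_square:
  "integrable lborel (\<lambda>x. indicator {0..1} x * ((profile' (x - \<theta>))\<^sup>2 / profile (x - \<theta>)))"
  using profile_pos by (intro integrable_indicator_Icc_mult continuous_intros) (metis less_irrefl)

lemma integral_score_square_le:
  "(\<integral>x. indicator {0..1} x * ((profile' (x - \<theta>))\<^sup>2 / profile (x - \<theta>)) \<partial>lborel)
    \<le> 4 * pi\<^sup>2 / (\<rho> * (1 - \<rho>))"
proof -
  define bound where "bound x = 2 * (w1 \<rho>)\<^sup>2 * indicator {L1 + \<theta>..L2 + \<theta>} x
    + 2 * (w2 \<rho>)\<^sup>2 * indicator {R2 + \<theta>..R1 + \<theta>} x" for x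
  have integrable_bound: "integrable lborel bound"
    unfolding bound_def
    by (intro Bochner_Integration.integrable_add integrable_mult_right)
      (auto simp: integrable_indicator_iff emeasure_lborel_Icc_eq)
  have "indicator {0..1} x * ((profile' (x - \<theta>))\<^sup>2 / profile (x - \<theta>)) \<le> bound x" for x
  proof -
    have "indicator {0..1} x * ((profile' (x - \<theta>))\<^sup>2 / profile (x - \<theta>))
        \<le> (profile' (x - \<theta>))\<^sup>2 / profile (x - \<theta>)"
      using profile_pos[of "x - \<theta>"] by (simp add: indicator_def)
    also have "\<dots> \<le> bound x"
      using profile'_square_div_le[of "x - \<theta>"] by (simp add: bound_def indicator_def algebra_simps)
    finally show ?thesis .
  qed
  then have "(\<integral>x. indicator {0..1} x * ((profile' (x - \<theta>))\<^sup>2 / profile (x - \<theta>)) \<partial>lborel)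
      \<le> (\<integral>x. bound x \<partial>lborel)"
    by (rule integral_mono[OF integrable_score_square integrable_bound])
  also have "\<dots> = 2 * w1 \<rho> * (w1 \<rho> * (L2 - L1)) + 2 * w2 \<rho> * (w2 \<rho> * (R1 - R2))"
    using breakpoints_ordered unfolding bound_def
    by (subst Bochner_Integration.integral_add)
      (auto simp: integrable_indicator_iff emeasure_lborel_Icc_eq power2_eq_square)
  also have "\<dots> = 2 * w1 \<rho> * pi + 2 * w2 \<rho> * pi"
    by (simp only: half_periods)
  also have "\<dots> = 4 * pi\<^sup>2 / (\<rho> * (1 - \<rho>))"
    using rho_pos rho_less_one by (simp add: w1_def w2_def field_simps power2_eq_square)
  finally show ?thesis .
qed

lemma fisher_integrand_eq:
  "joint_dens \<rho> \<alpha> t \<theta> X * (deriv (\<lambda>s. ln (joint_dens \<rho> \<alpha> t s X)) \<theta>)\<^sup>2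
    = (\<Prod>k<t. indicator {0..1} (X k) * profile (X k - \<theta>))
      * (\<Sum>k<t. profile' (X k - \<theta>) / profile (X k - \<theta>))\<^sup>2"
proof (cases "\<forall>k<t. X k \<in> {0..1}")
  case True
  then have "joint_dens \<rho> \<alpha> t s X = (\<Prod>k<t. profile (X k - s))" for s
    by (simp add: joint_dens_def fdens_eq_profile)
  then have "deriv (\<lambda>s. ln (joint_dens \<rho> \<alpha> t s X)) \<theta>
      = - (\<Sum>k<t. profile' (X k - \<theta>) / profile (X k - \<theta>))"
    by (simp add: deriv_ln_prod_shift profile_pos DERIV_profile)
  with True show ?thesis
    by (simp add: joint_dens_def fdens_eq_profile)
next
  case False
  then obtain j where "j < t" "X j \<notin> {0..1}"
    by blast
  then have "(\<Prod>k<t. indicator {0..1} (X k) * profile (X k - \<theta>)) = (0 :: real)"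
    by (intro prod_zero) (auto intro!: bexI[of _ j])
  then show ?thesis
    by (simp add: joint_dens_def fdens_eq_profile)
qed

lemma fisher_info_le:
  assumes "0 \<le> L1 + \<theta>" and "R1 + \<theta> \<le> 1"
  shows "fisher_info \<rho> \<alpha> t \<theta> \<le> ennreal (4 * pi\<^sup>2 * real t / (\<rho> * (1 - \<rho>)))"
proof -
  define \<phi> where "\<phi> y = indicator {0..1} y * profile (y - \<theta>)" for y
  define b where "b y = profile' (y - \<theta>) / profile (y - \<theta>)" for y
  have \<phi>_b: "\<phi> y * b y = indicator {0..1} y * profile' (y - \<theta>)" for y
    using profile_pos[of "y - \<theta>"] by (simp add: \<phi>_def b_def)
  have \<phi>_b_square:
    "\<phi> y * (b y)\<^sup>2 = indicator {0..1} y * ((profile' (y - \<theta>))\<^sup>2 / profile (y - \<theta>))" for y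
    using profile_pos[of "y - \<theta>"] by (simp add: \<phi>_def b_def power2_eq_square)
  have "fisher_info \<rho> \<alpha> t \<theta>
      = (\<integral>\<^sup>+X. ennreal ((\<Prod>k<t. \<phi> (X k)) * (\<Sum>k<t. b (X k))\<^sup>2) \<partial>PiM {..<t} (\<lambda>_. lborel))"
    unfolding fisher_info_def fisher_integrand_eq \<phi>_def b_def ..
  also have "\<dots> = ennreal (card {..<t} * (\<integral>y. \<phi> y * (b y)\<^sup>2 \<partial>lborel))"
  proof (rule nn_integral_PiM_prod_sum_square)
    show "sigma_finite_measure lborel"
      by (rule lborel.sigma_finite_measure_axioms)
    show "0 \<le> \<phi> y" for y
      using profile_pos[of "y - \<theta>"] by (simp add: \<phi>_def)
    show "integrable lborel \<phi>"
      unfolding \<phi>_def[abs_def] by (intro integrable_indicator_Icc_mult continuous_intros)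
    show "integrable lborel (\<lambda>y. \<phi> y * b y)"
      unfolding \<phi>_b by (intro integrable_indicator_Icc_mult continuous_intros)
    show "integrable lborel (\<lambda>y. \<phi> y * (b y)\<^sup>2)"
      unfolding \<phi>_b_square by (rule integrable_score_square)
    show "(\<integral>y. \<phi> y \<partial>lborel) = 1"
      unfolding \<phi>_def by (rule integral_profile_shift[OF assms])
    show "(\<integral>y. \<phi> y * b y \<partial>lborel) = 0"
      unfolding \<phi>_b by (rule integral_profile'_shift[OF assms])
  qed simp
  also have "\<dots> \<le> ennreal (4 * pi\<^sup>2 * real t / (\<rho> * (1 - \<rho>)))"
  proof (rule ennreal_leI)
    have "real t * (\<integral>y. \<phi> y * (b y)\<^sup>2 \<partial>lborel) \<le> real t * (4 * pi\<^sup>2 / (\<rho> * (1 - \<rho>)))"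
      using integral_score_square_le[of \<theta>] by (intro mult_left_mono) (simp_all add: \<phi>_b_square)
    then show "card {..<t} * (\<integral>y. \<phi> y * (b y)\<^sup>2 \<partial>lborel) \<le> 4 * pi\<^sup>2 * real t / (\<rho> * (1 - \<rho>))"
      by (simp add: mult_ac)
  qed
  finally show ?thesis .
qed

lemma support_in_unit_interval:
  assumes "\<alpha> \<le> 2 * \<rho>" and "\<alpha> \<le> 2 * (1 - \<rho>)" and "\<bar>\<theta>\<bar> \<le> \<alpha> / 20"
  shows "0 \<le> L1 + \<theta>" and "R1 + \<theta> \<le> 1"
proof -
  have denom_pos: "0 < 16 - 8 * \<alpha>"
    using alpha_le_one by simp
  have "\<alpha> / 20 * (16 - 8 * \<alpha>) \<le> \<alpha> / 20 * 20"
    using alpha_pos by (intro mult_left_mono) auto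
  also have "\<dots> \<le> 4 * \<rho> - \<alpha>"
    using assms(1) by simp
  finally have "\<alpha> / 20 \<le> L1"
    using denom_pos by (simp add: L1_def l1_def pos_le_divide_eq)
  then show "0 \<le> L1 + \<theta>"
    using assms(3) by linarith
  have "4 * \<rho> - \<alpha> \<le> 4 - 3 * \<alpha>"
    using assms(2) by simp
  also have "\<dots> \<le> 4 - 3 * \<alpha> + \<alpha> * (1 + 2 * \<alpha>) / 5"
    using alpha_pos by simp
  also have "\<dots> = (1/4 - \<alpha> / 20) * (16 - 8 * \<alpha>)"
    by (simp add: field_simps)
  finally have "L1 \<le> 1/4 - \<alpha> / 20"
    using denom_pos by (simp add: L1_def l1_def pos_divide_le_eq)
  then show "R1 + \<theta> \<le> 1"
    using abs_le_D1[OF assms(3)] by (simp add: breakpoint_gaps diff_divide_distrib)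
qed

end

theorem lemma4:
  fixes \<rho> \<alpha> :: real
  assumes "0 < \<rho>" and "\<rho> < 1" and "0 < \<alpha>"
    and "\<alpha> \<le> min (1/2) (min (2*\<rho>) (2*(1 - \<rho>)))"
  shows "\<forall>t::nat. t \<ge> 1 \<longrightarrow> (\<forall>\<theta> \<in> {-\<alpha>/20 .. \<alpha>/20}.
           fisher_info \<rho> \<alpha> t \<theta> \<le> ennreal (4 * pi^2 * real t / (\<rho> * (1 - \<rho>))))"
proof (intro allI impI ballI)
  fix t :: nat and \<theta> :: real
  assume "\<theta> \<in> {-\<alpha>/20 .. \<alpha>/20}"
  then have "\<bar>\<theta>\<bar> \<le> \<alpha> / 20"
    by auto
  interpret two_bump_density \<rho> \<alpha>
    using assms by unfold_locales auto
  show "fisher_info \<rho> \<alpha> t \<theta> \<le> ennreal (4 * pi^2 * real t / (\<rho> * (1 - \<rho>)))"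
    using assms support_in_unit_interval[OF _ _ \<open>\<bar>\<theta>\<bar> \<le> \<alpha> / 20\<close>] by (intro fisher_info_le) auto
qed

end
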